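(* Let $m\ge 1$ and for relays $j=1,\dots,m$ let $a_{sj}$ (source to relay $j$) and $a_{jd}$ (relay $j$ to destination) be mutually independent circularly symmetric complex Gaussian $\mathcal{CN}(0,1)$ channel gains. Let the best relay $b$ be chosen so that $$\min(|a_{sb}|^2,|a_{bd}|^2) = \max\{\min(|a_{s1}|^2,|a_{1d}|^2),\dots,\min(|a_{sm}|^2,|a_{md}|^2)\}.$$ Then: (1) $\min(|a_{sb}|^2,|a_{bd}|^2)$ has exponential order $V$ whose density satisfies $f_V(v)\doteq\rho^{-mv}$ for $v\ge0$ and $f_V(v)=0$ for $v<0$; in particular $\Pr(\min(|a_{sb}|^2,|a_{bd}|^2)\le\rho^{-v})\doteq\rho^{-mv}$ for $v\ge 0$. (2) $\Pr(|a_{sb}|^2\le\rho^{-v}) = \Pr(|a_{bd}|^2\le\rho^{-v}) \stackrel{.}{\leq} \rho^{-mv}$ if $v\ge 0$, and $\le 1$ otherwise.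
   Context: For a function $g(\rho)$, $g(\rho)\doteq\rho^{b}$ means $\lim_{\rho\to\infty}\frac{\log g(\rho)}{\log\rho}=b$, and $g(\rho)\stackrel{.}{\leq}\rho^b$ means $\lim_{\rho\to\infty}\frac{\log g(\rho)}{\log\rho}\le b$. The exponential order of a nonnegative random variable $X$ is $V=-\lim_{\rho\to\infty}\frac{\log X}{\log\rho}$. *)

theory Defs
  imports "HOL-Probability.Probability"
begin

text \<open>Density of the circularly symmetric complex Gaussian CN(0,1) on the complex plane
  (w.r.t. Lebesgue measure on C = R^2): z maps to exp(-|z|^2)/pi.\<close>
definition CN01_density :: "complex \<Rightarrow> ennreal" where
  "CN01_density z = ennreal (exp (- (cmod z)\<^sup>2) / pi)"

end

theory Submission
  imports Defs "HOL-Real_Asymp.Real_Asymp"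
begin

text \<open>
  The squared modulus of a CN(0,1) gain satisfies \<open>t exp(-t) \<le> P(\<bar>a\<bar>\<^sup>2 \<le> t) \<le> t\<close> and
  \<open>0 < P(\<bar>a\<bar>\<^sup>2 \<ge> T) \<le> 2 exp(-T/2)\<close>, by bounding the density on the relevant sets.
  The best relay maximises \<open>min(\<bar>asr j\<bar>\<^sup>2, \<bar>adr j\<bar>\<^sup>2)\<close>, so its minimum is at most \<open>t\<close> exactly
  when that of every relay is; by independence its distribution function is a product of
  \<open>m\<close> factors between \<open>t/e\<close> and \<open>2t\<close> for \<open>t \<le> 1\<close>, and \<open>t = \<rho> powr -v\<close> gives the exponential
  order \<open>m v\<close>. Its upper tail lies between the event that relay 1 has both gains large and a
  union bound over the relays. The source-relay gain of the best relay is dominated by the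
  minimum, and it has the same law as the relay-destination gain: exchanging the two hops
  of every relay preserves the joint law of all gains and, as ties have probability zero,
  almost surely does not change the best relay.
\<close>

abbreviation CN01 :: "complex measure" where
  "CN01 \<equiv> density lborel CN01_density"

lemma CN01_density_measurable[measurable]: "CN01_density \<in> borel_measurable borel"
  unfolding CN01_density_def by measurable

lemma emeasure_lborel_sq_norm_le:
  assumes "0 \<le> t"
  shows "emeasure lborel {z::complex. (cmod z)\<^sup>2 \<le> t} = ennreal (pi * t)"
proof -
  have "{z::complex. (cmod z)\<^sup>2 \<le> t} = cball 0 (sqrt t)"
    using assms by (auto simp: real_le_rsqrt) (metis norm_ge_zero power_mono real_sqrt_pow2)
  then show ?thesis
    using assms by (simp add: emeasure_cball eval_unit_ball_vol)
qed

lemma emeasure_CN01_le: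
  assumes "A \<in> sets borel"
  shows "emeasure CN01 A \<le> ennreal (1 / pi) * emeasure lborel A"
proof -
  have "emeasure CN01 A = (\<integral>\<^sup>+z. CN01_density z * indicator A z \<partial>lborel)"
    using assms by (simp add: emeasure_density)
  also have "\<dots> \<le> (\<integral>\<^sup>+z. ennreal (1 / pi) * indicator A z \<partial>lborel)"
    unfolding CN01_density_def
    by (intro nn_integral_mono mult_right_mono ennreal_leI divide_right_mono) auto
  also have "\<dots> = ennreal (1 / pi) * emeasure lborel A"
    using assms by (simp add: nn_integral_cmult_indicator)
  finally show ?thesis .
qed

lemma emeasure_CN01_ge:
  assumes "B \<subseteq> A" "B \<in> sets borel" "A \<in> sets borel"
    and "\<And>z. z \<in> B \<Longrightarrow> c \<le> exp (- (cmod z)\<^sup>2) / pi"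
  shows "ennreal c * emeasure lborel B \<le> emeasure CN01 A"
proof -
  have "ennreal c * emeasure lborel B = (\<integral>\<^sup>+z. ennreal c * indicator B z \<partial>lborel)"
    using assms by (simp add: nn_integral_cmult_indicator)
  also have "\<dots> \<le> (\<integral>\<^sup>+z. CN01_density z * indicator A z \<partial>lborel)"
    unfolding CN01_density_def using assms(1,4)
    by (intro nn_integral_mono) (auto simp: indicator_def intro!: ennreal_leI)
  also have "\<dots> = emeasure CN01 A"
    using assms by (simp add: emeasure_density)
  finally show ?thesis .
qed

lemma emeasure_CN01_disk_le:
  assumes "0 \<le> t"
  shows "emeasure CN01 {z. (cmod z)\<^sup>2 \<le> t} \<le> ennreal t"
  using emeasure_CN01_le[of "{z. (cmod z)\<^sup>2 \<le> t}"] assms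
  by (simp add: emeasure_lborel_sq_norm_le ennreal_mult[symmetric])

lemma emeasure_CN01_disk_ge:
  assumes "0 \<le> t"
  shows "ennreal (t * exp (-t)) \<le> emeasure CN01 {z. (cmod z)\<^sup>2 \<le> t}"
proof -
  have "ennreal (exp (-t) / pi) * emeasure lborel {z. (cmod z)\<^sup>2 \<le> t}
      \<le> emeasure CN01 {z. (cmod z)\<^sup>2 \<le> t}"
    by (rule emeasure_CN01_ge) (auto intro: divide_right_mono)
  then show ?thesis
    using assms by (simp add: emeasure_lborel_sq_norm_le ennreal_mult[symmetric] mult.commute)
qed

text \<open>The disk of radius \<open>1/2\<close> around the real point \<open>sqrt \<bar>T\<bar> + 1\<close> lies in the tail.\<close>
lemma emeasure_CN01_tail_pos: "0 < emeasure CN01 {z. T \<le> (cmod z)\<^sup>2}"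
proof -
  define r where "r = sqrt \<bar>T\<bar> + 1"
  let ?B = "ball (complex_of_real r) (1/2)"
  have "cmod (complex_of_real r) = r" by (simp add: r_def)
  then have near: "r - 1/2 < cmod z \<and> cmod z < r + 1/2" if "z \<in> ?B" for z
    using that norm_triangle_ineq3[of z "complex_of_real r"]
    by (simp add: dist_norm norm_minus_commute abs_le_iff)
  have "ennreal (exp (- (r + 1/2)\<^sup>2) / pi) * emeasure lborel ?B
      \<le> emeasure CN01 {z. T \<le> (cmod z)\<^sup>2}"
  proof (rule emeasure_CN01_ge)
    show "?B \<subseteq> {z. T \<le> (cmod z)\<^sup>2}"
    proof
      fix z assume "z \<in> ?B"
      then have "sqrt \<bar>T\<bar> \<le> cmod z" using near unfolding r_def by force
      then have "(sqrt \<bar>T\<bar>)\<^sup>2 \<le> (cmod z)\<^sup>2" by (intro power_mono) auto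
      then show "z \<in> {z. T \<le> (cmod z)\<^sup>2}" by simp
    qed
    fix z assume "z \<in> ?B"
    then have "(cmod z)\<^sup>2 \<le> (r + 1/2)\<^sup>2" using near[of z] by (intro power_mono) auto
    then show "exp (- (r + 1/2)\<^sup>2) / pi \<le> exp (- (cmod z)\<^sup>2) / pi"
      by (intro divide_right_mono) auto
  qed auto
  moreover have "0 < ennreal (exp (- (r + 1/2)\<^sup>2) / pi) * emeasure lborel ?B"
    by (simp add: emeasure_ball eval_unit_ball_vol ennreal_mult[symmetric])
  ultimately show ?thesis by order
qed

lemma emeasure_density_sq_norm_eq:
  assumes "f \<in> borel_measurable borel"
  shows "emeasure (density lborel f) {z::complex. (cmod z)\<^sup>2 = s} = 0"
proof -
  have "sphere (0::complex) (sqrt s) \<in> null_sets lborel"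
    using negligible_sphere[of "0::complex" "sqrt s"]
    by (auto simp: null_sets_completion_iff negligible_iff_null_sets)
  then have "{z::complex. (cmod z)\<^sup>2 = s} \<in> null_sets lborel"
    by (rule null_sets_subset) auto
  then show ?thesis
    using assms by (subst emeasure_density) (auto intro: nn_integral_null_set)
qed

text \<open>On the tail, \<open>exp (-\<bar>z\<bar>\<^sup>2) \<le> exp (-T/2) exp (-\<bar>z\<bar>\<^sup>2/2)\<close>, and the rescaled
  density \<open>exp (-\<bar>z\<bar>\<^sup>2/2) / pi\<close> has total mass 2.\<close>
lemma emeasure_CN01_tail_le:
  assumes "prob_space CN01"
  shows "emeasure CN01 {z. T \<le> (cmod z)\<^sup>2} \<le> ennreal (2 * exp (-T/2))"
proof -
  have total: "(\<integral>\<^sup>+z. CN01_density z \<partial>lborel) = 1"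
    using prob_space.emeasure_space_1[OF assms] by (simp add: emeasure_density)
  define g :: "complex \<Rightarrow> ennreal" where "g z = ennreal (exp (- (cmod z)\<^sup>2 / 2) / pi)" for z
  have g_measurable[measurable]: "g \<in> borel_measurable borel" unfolding g_def by measurable
  have g_scaled: "g (sqrt 2 *\<^sub>R z) = CN01_density z" for z
    unfolding g_def CN01_density_def by (simp add: power_mult_distrib)
  have "(\<integral>\<^sup>+z. g z \<partial>lborel)
      = (\<integral>\<^sup>+z. g z \<partial>density (distr lborel borel (\<lambda>x. 0 + sqrt 2 *\<^sub>R x)) (\<lambda>_. \<bar>sqrt 2\<bar> ^ DIM(complex)))"
    by (subst lborel_affine[of "sqrt 2" "0::complex", symmetric]) simp_all
  also have "\<dots> = (\<integral>\<^sup>+z. ennreal 2 * CN01_density z \<partial>lborel)"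
    by (simp add: nn_integral_density nn_integral_distr g_scaled)
  also have "\<dots> = 2"
    by (simp add: nn_integral_cmult total)
  finally have g_total: "(\<integral>\<^sup>+z. g z \<partial>lborel) = 2" .
  let ?S = "{z::complex. T \<le> (cmod z)\<^sup>2}"
  have "emeasure CN01 ?S = (\<integral>\<^sup>+z. CN01_density z * indicator ?S z \<partial>lborel)"
    by (simp add: emeasure_density)
  also have "\<dots> \<le> (\<integral>\<^sup>+z. ennreal (exp (-T/2)) * g z \<partial>lborel)"
  proof (intro nn_integral_mono)
    fix z :: complex
    show "CN01_density z * indicator ?S z \<le> ennreal (exp (-T/2)) * g z"
    proof (cases "T \<le> (cmod z)\<^sup>2")
      case True
      have "exp (- (cmod z)\<^sup>2) = exp (- (cmod z)\<^sup>2 / 2) * exp (- (cmod z)\<^sup>2 / 2)"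
        by (simp add: exp_add[symmetric])
      also have "\<dots> \<le> exp (-T/2) * exp (- (cmod z)\<^sup>2 / 2)"
        using True by (intro mult_right_mono) auto
      finally show ?thesis
        using True unfolding CN01_density_def g_def
        by (simp add: ennreal_mult[symmetric] ennreal_leI divide_right_mono)
    qed simp
  qed
  also have "\<dots> = ennreal (exp (-T/2)) * 2"
    by (simp add: nn_integral_cmult g_total)
  also have "\<dots> = ennreal (2 * exp (-T/2))"
    by (simp add: ennreal_mult mult.commute)
  finally show ?thesis .
qed

lemma (in prob_space) AE_indep_var_neq:
  fixes X Y :: "'a \<Rightarrow> real"
  assumes indep: "indep_var borel X borel Y"
    and no_atoms: "\<And>s. prob {\<omega>\<in>space M. Y \<omega> = s} = 0"
  shows "AE \<omega> in M. X \<omega> \<noteq> Y \<omega>"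
proof -
  have [measurable]: "X \<in> borel_measurable M" "Y \<in> borel_measurable M"
    using indep_var_rv1[OF indep] indep_var_rv2[OF indep] by auto
  interpret Y: prob_space "distr M borel Y"
    by (rule prob_space_distr) simp
  define D where "D = {p \<in> space (borel \<Otimes>\<^sub>M borel). fst p = (snd p :: real)}"
  have D[measurable]: "D \<in> sets (borel \<Otimes>\<^sub>M borel)" unfolding D_def by measurable
  have "emeasure (distr M borel X \<Otimes>\<^sub>M distr M borel Y) D
      = (\<integral>\<^sup>+x. emeasure (distr M borel Y) (Pair x -` D) \<partial>distr M borel X)"
    by (rule Y.emeasure_pair_measure_alt)
       (simp add: sets_pair_measure_cong[of "distr M borel X" borel "distr M borel Y" borel])
  also have "\<dots> = (\<integral>\<^sup>+x. 0 \<partial>distr M borel X)"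
  proof (intro nn_integral_cong)
    fix x :: real
    have "Pair x -` D = {x}" by (auto simp: D_def space_pair_measure)
    moreover have "Y -` {x} \<inter> space M = {\<omega>\<in>space M. Y \<omega> = x}" by auto
    ultimately show "emeasure (distr M borel Y) (Pair x -` D) = 0"
      using no_atoms[of x] by (simp add: emeasure_distr emeasure_eq_measure)
  qed
  finally have "emeasure (distr M (borel \<Otimes>\<^sub>M borel) (\<lambda>\<omega>. (X \<omega>, Y \<omega>))) D = 0"
    using indep by (simp add: indep_var_distribution_eq)
  moreover have "(\<lambda>\<omega>. (X \<omega>, Y \<omega>)) -` D \<inter> space M = {\<omega>\<in>space M. \<not> X \<omega> \<noteq> Y \<omega>}"
    by (auto simp: D_def space_pair_measure)
  ultimately show ?thesis
    by (subst AE_iff_measurable[OF _ refl]) (auto simp: emeasure_distr)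
qed

lemma ln_power_powr:
  fixes c \<rho> :: real
  assumes "0 < c" "0 < \<rho>"
  shows "ln ((c * \<rho> powr -v) ^ m) = real m * (ln c - v * ln \<rho>)"
  using assms by (simp add: ln_realpow ln_mult ln_powr algebra_simps)

lemma ln_div_ln_mono:
  fixes p q \<rho> :: real
  assumes "0 < p" "p \<le> q" "1 < \<rho>"
  shows "ln p / ln \<rho> \<le> ln q / ln \<rho>"
  using assms by (intro divide_right_mono) simp_all

lemma tendsto_ln_div_ln_of_power_bounds:
  fixes p :: "real \<Rightarrow> real"
  assumes "0 < c" "0 < C"
    and bounds: "\<forall>\<^sub>F \<rho> in at_top. (c * \<rho> powr -v) ^ m \<le> p \<rho> \<and> p \<rho> \<le> (C * \<rho> powr -v) ^ m"
  shows "((\<lambda>\<rho>. ln (p \<rho>) / ln \<rho>) \<longlongrightarrow> - (real m * v)) at_top"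
proof (rule tendsto_sandwich)
  show "\<forall>\<^sub>F \<rho> in at_top. real m * (ln c - v * ln \<rho>) / ln \<rho> \<le> ln (p \<rho>) / ln \<rho>"
    using bounds eventually_gt_at_top[of 1]
  proof eventually_elim
    case (elim \<rho>)
    then show ?case
      using ln_div_ln_mono[of "(c * \<rho> powr -v) ^ m" "p \<rho>"] ln_power_powr[of c \<rho>] \<open>0 < c\<close> by simp
  qed
  show "\<forall>\<^sub>F \<rho> in at_top. ln (p \<rho>) / ln \<rho> \<le> real m * (ln C - v * ln \<rho>) / ln \<rho>"
    using bounds eventually_gt_at_top[of 1]
  proof eventually_elim
    case (elim \<rho>)
    then have "0 < p \<rho>"
      using \<open>0 < c\<close> by (smt (verit) powr_gt_zero zero_less_mult_iff zero_less_power)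
    then show ?case
      using elim ln_div_ln_mono[of "p \<rho>" "(C * \<rho> powr -v) ^ m"] ln_power_powr[of C \<rho>] \<open>0 < C\<close> by simp
  qed
qed real_asymp+

lemma Limsup_ln_div_ln_le_of_power_bound:
  fixes p :: "real \<Rightarrow> real"
  assumes "0 < C"
    and bound: "\<forall>\<^sub>F \<rho> in at_top. 0 < p \<rho> \<and> p \<rho> \<le> (C * \<rho> powr -v) ^ m"
  shows "Limsup at_top (\<lambda>\<rho>. ereal (ln (p \<rho>) / ln \<rho>)) \<le> ereal (- (real m * v))"
proof -
  have "\<forall>\<^sub>F \<rho> in at_top. ereal (ln (p \<rho>) / ln \<rho>) \<le> ereal (real m * (ln C - v * ln \<rho>) / ln \<rho>)"
    using bound eventually_gt_at_top[of 1]
  proof eventually_elim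
    case (elim \<rho>)
    then show ?case
      using ln_div_ln_mono[of "p \<rho>" "(C * \<rho> powr -v) ^ m"] ln_power_powr[of C \<rho>] \<open>0 < C\<close> by simp
  qed
  then have "Limsup at_top (\<lambda>\<rho>. ereal (ln (p \<rho>) / ln \<rho>))
      \<le> Limsup at_top (\<lambda>\<rho>. ereal (real m * (ln C - v * ln \<rho>) / ln \<rho>))"
    by (rule Limsup_mono)
  also have "\<dots> = ereal (- (real m * v))"
    by (intro lim_imp_Limsup tendsto_ereal) (simp, real_asymp)
  finally show ?thesis .
qed

lemma filterlim_ln_div_ln_at_bot_of_exp_bound:
  fixes p :: "real \<Rightarrow> real"
  assumes "v < 0" "0 < K"
    and bound: "\<forall>\<^sub>F \<rho> in at_top. 0 < p \<rho> \<and> p \<rho> \<le> K * exp (- (\<rho> powr -v) / 2)"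
  shows "filterlim (\<lambda>\<rho>. ln (p \<rho>) / ln \<rho>) at_bot at_top"
proof (rule filterlim_at_bot_mono)
  show "filterlim (\<lambda>\<rho>. (ln K - \<rho> powr -v / 2) / ln \<rho>) at_bot at_top"
    using \<open>v < 0\<close> by real_asymp
  show "\<forall>\<^sub>F \<rho> in at_top. ln (p \<rho>) / ln \<rho> \<le> (ln K - \<rho> powr -v / 2) / ln \<rho>"
    using bound eventually_gt_at_top[of 1]
  proof eventually_elim
    case (elim \<rho>)
    then show ?case
      using ln_div_ln_mono[of "p \<rho>" "K * exp (- (\<rho> powr -v) / 2)"] \<open>0 < K\<close> by (simp add: ln_mult)
  qed
qed

lemma powr_minus_bounds:
  fixes \<rho> :: real
  assumes "0 \<le> v" "1 < \<rho>"
  shows "0 < \<rho> powr -v" and "\<rho> powr -v \<le> 1"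
  using ge_one_powr_ge_zero[of \<rho> v] assms by (simp_all add: powr_minus field_simps)

lemma measure_PiM_reindex:
  assumes "prob_space N" "inj_on \<sigma> I" "\<sigma> \<in> I \<rightarrow> I" "A \<in> sets (PiM I (\<lambda>_. N))"
  shows "measure (PiM I (\<lambda>_. N)) {x \<in> space (PiM I (\<lambda>_. N)). (\<lambda>i\<in>I. x (\<sigma> i)) \<in> A}
       = measure (PiM I (\<lambda>_. N)) A"
proof -
  let ?Q = "PiM I (\<lambda>_. N)"
  have "(\<lambda>x. \<lambda>i\<in>I. x (\<sigma> i)) \<in> ?Q \<rightarrow>\<^sub>M ?Q"
    using assms(3) by (intro measurable_restrict measurable_component_singleton) auto
  moreover have "distr ?Q ?Q (\<lambda>x. \<lambda>i\<in>I. x (\<sigma> i)) = ?Q"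
    using distr_PiM_reindex[of I "\<lambda>_. N" \<sigma> I] assms by simp
  ultimately show ?thesis
    using measure_distr[of "\<lambda>x. \<lambda>i\<in>I. x (\<sigma> i)" ?Q ?Q A] assms(4)
    by (simp add: vimage_def Int_def conj_commute)
qed

lemma (in prob_space) indep_vars_indep_var:
  assumes "indep_vars M' X I" "i \<in> I" "j \<in> I" "i \<noteq> j"
  shows "indep_var (M' i) (X i) (M' j) (X j)"
proof -
  have "indep_var (PiM {i} M') (\<lambda>\<omega>. restrict (\<lambda>i. X i \<omega>) {i}) (PiM {j} M') (\<lambda>\<omega>. restrict (\<lambda>i. X i \<omega>) {j})"
    using assms by (intro indep_var_restrict) auto
  then have "indep_var (M' i) ((\<lambda>x. x i) \<circ> (\<lambda>\<omega>. restrict (\<lambda>i. X i \<omega>) {i}))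
      (M' j) ((\<lambda>x. x j) \<circ> (\<lambda>\<omega>. restrict (\<lambda>i. X i \<omega>) {j}))"
    by (rule indep_var_compose) (rule measurable_component_singleton, simp)+
  then show ?thesis by (simp add: o_def)
qed

locale best_relay_selection = prob_space M for M :: "'a measure" +
  fixes m :: nat and asr adr :: "nat \<Rightarrow> 'a \<Rightarrow> complex" and b :: "'a \<Rightarrow> nat"
  assumes m_ge_1: "m \<ge> 1"
    and asr_distributed: "\<forall>j\<in>{1..m}. distributed M lborel (asr j) CN01_density"
    and adr_distributed: "\<forall>j\<in>{1..m}. distributed M lborel (adr j) CN01_density"
    and indep_links: "indep_vars (\<lambda>_. borel)
           (\<lambda>(j, k). if k then asr j else adr j) ({1..m} \<times> (UNIV :: bool set))"
    and b_measurable: "b \<in> M \<rightarrow>\<^sub>M count_space UNIV"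
    and b_best: "\<forall>\<omega>\<in>space M. b \<omega> \<in> {1..m} \<and>
           min ((cmod (asr (b \<omega>) \<omega>))\<^sup>2) ((cmod (adr (b \<omega>) \<omega>))\<^sup>2) =
           Max ((\<lambda>j. min ((cmod (asr j \<omega>))\<^sup>2) ((cmod (adr j \<omega>))\<^sup>2)) ` {1..m})"
begin

abbreviation links :: "(nat \<times> bool) set" where
  "links \<equiv> {1..m} \<times> UNIV"

definition link :: "nat \<times> bool \<Rightarrow> 'a \<Rightarrow> complex" where
  "link = (\<lambda>(j, k). if k then asr j else adr j)"

abbreviation gain :: "nat \<Rightarrow> 'a \<Rightarrow> real" where
  "gain j \<omega> \<equiv> min ((cmod (asr j \<omega>))\<^sup>2) ((cmod (adr j \<omega>))\<^sup>2)"

lemma link_simps[simp]: "link (j, True) = asr j" "link (j, False) = adr j"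
  by (simp_all add: link_def)

lemma indep_vars_link: "indep_vars (\<lambda>_. borel) link links"
  using indep_links unfolding link_def .

lemma link_measurable: "i \<in> links \<Longrightarrow> link i \<in> borel_measurable M"
  using indep_vars_link by (auto simp: indep_vars_def)

lemma asr_measurable: "j \<in> {1..m} \<Longrightarrow> asr j \<in> borel_measurable M"
  and adr_measurable: "j \<in> {1..m} \<Longrightarrow> adr j \<in> borel_measurable M"
  using link_measurable[of "(j, True)"] link_measurable[of "(j, False)"] by simp_all

lemma distr_link:
  assumes "i \<in> links"
  shows "distr M borel (link i) = CN01"
proof -
  obtain j k where i: "i = (j, k)" and j: "j \<in> {1..m}" using assms by auto
  have "distributed M lborel (link i) CN01_density"
    using asr_distributed adr_distributed j by (cases k) (auto simp: i)
  then have "distr M lborel (link i) = CN01" by (simp add: distributed_def)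
  moreover have "distr M borel (link i) = distr M lborel (link i)" by (rule distr_cong) auto
  ultimately show ?thesis by simp
qed

sublocale CN01: prob_space CN01
  using distr_link[of "(1, True)"] link_measurable[of "(1, True)"] m_ge_1
  by (metis prob_space_distr atLeastAtMost_iff le_refl mem_Sigma_iff UNIV_I)

lemma prob_link:
  assumes "i \<in> links" "{z. P z} \<in> sets borel"
  shows "prob {\<omega>\<in>space M. P (link i \<omega>)} = measure CN01 {z. P z}"
  using measure_distr[OF link_measurable[OF assms(1)] assms(2)] distr_link[OF assms(1)]
  by (simp add: vimage_def Int_def conj_commute)

lemma measure_CN01_disk_bounds:
  assumes "0 \<le> t"
  shows "t * exp (-t) \<le> measure CN01 {z. (cmod z)\<^sup>2 \<le> t}"
    and "measure CN01 {z. (cmod z)\<^sup>2 \<le> t} \<le> t"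
  using emeasure_CN01_disk_ge[OF assms] emeasure_CN01_disk_le[OF assms] assms
  by (simp_all add: CN01.emeasure_eq_measure)

lemma measure_CN01_tail_bounds:
  shows "0 < measure CN01 {z. T \<le> (cmod z)\<^sup>2}"
    and "measure CN01 {z. T \<le> (cmod z)\<^sup>2} \<le> 2 * exp (-T/2)"
  using emeasure_CN01_tail_pos[of T] emeasure_CN01_tail_le[OF CN01.prob_space_axioms, of T]
  by (simp_all add: CN01.emeasure_eq_measure)

lemma best_relay_range: "\<omega> \<in> space M \<Longrightarrow> b \<omega> \<in> {1..m}"
  using b_best by blast

lemma gain_le_best_gain: "\<omega> \<in> space M \<Longrightarrow> j \<in> {1..m} \<Longrightarrow> gain j \<omega> \<le> gain (b \<omega>) \<omega>"
  using b_best by (simp add: Max_ge)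

lemma best_gain_le_iff: "\<omega> \<in> space M \<Longrightarrow> gain (b \<omega>) \<omega> \<le> t \<longleftrightarrow> (\<forall>j\<in>{1..m}. gain j \<omega> \<le> t)"
  using b_best m_ge_1 by (simp add: Max_le_iff)

lemma b_measurable_relays: "b \<in> M \<rightarrow>\<^sub>M count_space {1..m}"
  unfolding measurable_count_space_eq2[OF finite_atLeastAtMost]
  using best_relay_range measurable_sets[OF b_measurable] by auto

lemma asr_best_measurable[measurable]: "(\<lambda>\<omega>. asr (b \<omega>) \<omega>) \<in> borel_measurable M"
  and adr_best_measurable[measurable]: "(\<lambda>\<omega>. adr (b \<omega>) \<omega>) \<in> borel_measurable M"
  by (auto intro!: measurable_compose_countable'[OF _ b_measurable_relays]
      asr_measurable adr_measurable)

lemma AE_sq_norm_link_neq: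
  assumes "i \<in> links" "i' \<in> links" "i \<noteq> i'"
  shows "AE \<omega> in M. (cmod (link i \<omega>))\<^sup>2 \<noteq> (cmod (link i' \<omega>))\<^sup>2"
proof (rule AE_indep_var_neq)
  show "indep_var borel (\<lambda>\<omega>. (cmod (link i \<omega>))\<^sup>2) borel (\<lambda>\<omega>. (cmod (link i' \<omega>))\<^sup>2)"
    using indep_var_compose[OF indep_vars_indep_var[OF indep_vars_link assms],
        of "\<lambda>z. (cmod z)\<^sup>2" borel "\<lambda>z. (cmod z)\<^sup>2" borel]
    by (simp add: o_def)
  show "prob {\<omega>\<in>space M. (cmod (link i' \<omega>))\<^sup>2 = s} = 0" for s
    using prob_link[OF assms(2), of "\<lambda>z. (cmod z)\<^sup>2 = s"]
      emeasure_density_sq_norm_eq[OF CN01_density_measurable, of s]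
    by (simp add: CN01.emeasure_eq_measure)
qed

lemma AE_gain_neq: "AE \<omega> in M. \<forall>j\<in>{1..m}. \<forall>k\<in>{1..m}. j \<noteq> k \<longrightarrow> gain j \<omega> \<noteq> gain k \<omega>"
proof -
  have gain_link: "\<exists>c. gain j \<omega> = (cmod (link (j, c) \<omega>))\<^sup>2" for j \<omega>
    by (metis link_simps min_def)
  have "AE \<omega> in M. \<forall>(i, i')\<in>{(i, i') \<in> links \<times> links. fst i \<noteq> fst i'}.
      (cmod (link i \<omega>))\<^sup>2 \<noteq> (cmod (link i' \<omega>))\<^sup>2"
  proof (rule AE_ball_countable')
    fix p assume "p \<in> {(i, i') \<in> links \<times> links. fst i \<noteq> fst i'}"
    then obtain i i' where "p = (i, i')" "i \<in> links" "i' \<in> links" "i \<noteq> i'" by auto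
    then show "AE \<omega> in M. case p of (i, i') \<Rightarrow> (cmod (link i \<omega>))\<^sup>2 \<noteq> (cmod (link i' \<omega>))\<^sup>2"
      using AE_sq_norm_link_neq by simp
  qed (auto intro: countable_finite finite_subset[of _ "links \<times> links"])
  then show ?thesis
  proof eventually_elim
    case (elim \<omega>)
    show ?case
    proof (intro ballI impI)
      fix j k assume "j \<in> {1..m}" "k \<in> {1..m}" "j \<noteq> k"
      moreover obtain c c' where "gain j \<omega> = (cmod (link (j, c) \<omega>))\<^sup>2"
        and "gain k \<omega> = (cmod (link (k, c') \<omega>))\<^sup>2"
        using gain_link by blast
      ultimately show "gain j \<omega> \<noteq> gain k \<omega>"
        using bspec[OF elim, of "((j, c), (k, c'))"] by simp
    qed
  qed
qed

lemma AE_best_relay_unique: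
  "AE \<omega> in M. \<forall>j\<in>{1..m}. (\<forall>k\<in>{1..m}. k \<noteq> j \<longrightarrow> gain k \<omega> < gain j \<omega>) \<longleftrightarrow> j = b \<omega>"
  using AE_gain_neq AE_space
proof eventually_elim
  case (elim \<omega>)
  note best = best_relay_range[OF elim(2)] gain_le_best_gain[OF elim(2)]
  show ?case
  proof (intro ballI, rule iffI)
    fix j assume "j \<in> {1..m}" "\<forall>k\<in>{1..m}. k \<noteq> j \<longrightarrow> gain k \<omega> < gain j \<omega>"
    then show "j = b \<omega>"
      using best by (metis not_le)
  next
    fix j assume "j = b \<omega>"
    then show "\<forall>k\<in>{1..m}. k \<noteq> j \<longrightarrow> gain k \<omega> < gain j \<omega>"
      using best elim(1) by (metis order_le_neq_trans)
  qed
qed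

definition link_vector :: "'a \<Rightarrow> nat \<times> bool \<Rightarrow> complex" where
  "link_vector \<omega> = (\<lambda>i\<in>links. link i \<omega>)"

lemma link_vector_measurable: "link_vector \<in> M \<rightarrow>\<^sub>M PiM links (\<lambda>_. borel)"
  unfolding link_vector_def by (rule measurable_restrict) (rule link_measurable)

lemma distr_link_vector: "distr M (PiM links (\<lambda>_. borel)) link_vector = PiM links (\<lambda>_. CN01)"
proof -
  have "distr M (PiM links (\<lambda>_. borel)) link_vector = PiM links (\<lambda>i. distr M borel (link i))"
    using indep_vars_iff_distr_eq_PiM'[where I=links and M'="\<lambda>_. borel" and X=link] indep_vars_link
      link_measurable m_ge_1
    unfolding link_vector_def by auto
  also have "\<dots> = PiM links (\<lambda>_. CN01)"
    by (rule PiM_cong) (simp_all add: distr_link)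
  finally show ?thesis .
qed

text \<open>Up to ties, which have probability zero, the event that hop \<open>c\<close> of the best relay has
  squared gain at most \<open>t\<close>, as a set of channel realisations. Exchanging the two hops of
  every relay maps it for \<open>c = True\<close> onto the one for \<open>c = False\<close>.\<close>
definition best_link_le :: "bool \<Rightarrow> real \<Rightarrow> (nat \<times> bool \<Rightarrow> complex) set" where
  "best_link_le c t = {x \<in> space (PiM links (\<lambda>_. borel)). \<exists>j\<in>{1..m}.
     (\<forall>k\<in>{1..m}. k \<noteq> j \<longrightarrow> min ((cmod (x (k, True)))\<^sup>2) ((cmod (x (k, False)))\<^sup>2)
                           < min ((cmod (x (j, True)))\<^sup>2) ((cmod (x (j, False)))\<^sup>2))
     \<and> (cmod (x (j, c)))\<^sup>2 \<le> t}"

lemma best_link_le_sets: "best_link_le c t \<in> sets (PiM links (\<lambda>_. borel))"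
  unfolding best_link_le_def by measurable

lemma link_best_measurable[measurable]: "(\<lambda>\<omega>. link (b \<omega>, c) \<omega>) \<in> borel_measurable M"
  by (cases c) simp_all

lemma prob_link_best_le:
  "prob {\<omega>\<in>space M. (cmod (link (b \<omega>, c) \<omega>))\<^sup>2 \<le> t}
     = measure (PiM links (\<lambda>_. CN01)) (best_link_le c t)"
proof -
  have pointwise: "(cmod (link (b \<omega>, c) \<omega>))\<^sup>2 \<le> t \<longleftrightarrow> link_vector \<omega> \<in> best_link_le c t"
    if "\<omega> \<in> space M" "\<forall>j\<in>{1..m}. (\<forall>k\<in>{1..m}. k \<noteq> j \<longrightarrow> gain k \<omega> < gain j \<omega>) \<longleftrightarrow> j = b \<omega>"
    for \<omega>
    using that measurable_space[OF link_vector_measurable that(1)] best_relay_range[OF that(1)]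
    by (auto simp: best_link_le_def link_vector_def)
  have "AE \<omega> in M. \<omega> \<in> {\<omega>\<in>space M. (cmod (link (b \<omega>, c) \<omega>))\<^sup>2 \<le> t}
      \<longleftrightarrow> \<omega> \<in> link_vector -` best_link_le c t \<inter> space M"
    using AE_best_relay_unique AE_space by eventually_elim (use pointwise in auto)
  then have "prob {\<omega>\<in>space M. (cmod (link (b \<omega>, c) \<omega>))\<^sup>2 \<le> t}
      = prob (link_vector -` best_link_le c t \<inter> space M)"
    by (rule measure_eq_AE)
       (simp_all add: measurable_sets[OF link_vector_measurable best_link_le_sets])
  also have "\<dots> = measure (PiM links (\<lambda>_. CN01)) (best_link_le c t)"
    using measure_distr[OF link_vector_measurable best_link_le_sets] distr_link_vector by simp
  finally show ?thesis .
qed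

lemma measure_best_link_le_swap:
  "measure (PiM links (\<lambda>_. CN01)) (best_link_le True t)
     = measure (PiM links (\<lambda>_. CN01)) (best_link_le False t)"
proof -
  define \<sigma> where "\<sigma> = (\<lambda>(j::nat, k::bool). (j, \<not> k))"
  have sets: "sets (PiM links (\<lambda>_. CN01)) = sets (PiM links (\<lambda>_. borel))"
    by (rule sets_PiM_cong) auto
  then have space: "space (PiM links (\<lambda>_. CN01)) = space (PiM links (\<lambda>_. borel))"
    by (rule sets_eq_imp_space_eq)
  have "{x \<in> space (PiM links (\<lambda>_. CN01)). (\<lambda>i\<in>links. x (\<sigma> i)) \<in> best_link_le True t}
      = best_link_le False t"
    unfolding space by (auto simp: best_link_le_def \<sigma>_def space_PiM min.commute)
  moreover have "measure (PiM links (\<lambda>_. CN01))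
      {x \<in> space (PiM links (\<lambda>_. CN01)). (\<lambda>i\<in>links. x (\<sigma> i)) \<in> best_link_le True t}
      = measure (PiM links (\<lambda>_. CN01)) (best_link_le True t)"
    using CN01.prob_space_axioms best_link_le_sets[of True t]
    by (intro measure_PiM_reindex) (auto simp: \<sigma>_def inj_on_def sets)
  ultimately show ?thesis by simp
qed

theorem prob_asr_best_eq_prob_adr_best:
  "prob {\<omega>\<in>space M. (cmod (asr (b \<omega>) \<omega>))\<^sup>2 \<le> t}
     = prob {\<omega>\<in>space M. (cmod (adr (b \<omega>) \<omega>))\<^sup>2 \<le> t}"
  using prob_link_best_le[of True t] prob_link_best_le[of False t] measure_best_link_le_swap
  by simp

lemma prob_all_links:
  assumes "J \<subseteq> links" "J \<noteq> {}" "A \<in> sets borel"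
  shows "prob {\<omega>\<in>space M. \<forall>i\<in>J. link i \<omega> \<in> A} = measure CN01 A ^ card J"
proof -
  have "finite J" using assms(1) by (rule finite_subset) simp
  have "{\<omega>\<in>space M. \<forall>i\<in>J. link i \<omega> \<in> A} = (\<Inter>i\<in>J. link i -` A \<inter> space M)"
    using assms(2) by auto
  also have "prob \<dots> = (\<Prod>i\<in>J. prob (link i -` A \<inter> space M))"
    using indep_varsD[OF indep_vars_link assms(2) \<open>finite J\<close> assms(1)] assms(3) by simp
  also have "\<dots> = (\<Prod>i\<in>J. measure CN01 A)"
    using prob_link[of _ "\<lambda>z. z \<in> A"] assms(1,3) by (intro prod.cong) (auto simp: vimage_def Int_def conj_commute)
  finally show ?thesis by simp
qed

lemma prob_gain_le_bounds:
  assumes "j \<in> {1..m}" "0 \<le> t"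
  shows "t * exp (-t) \<le> prob {\<omega>\<in>space M. gain j \<omega> \<le> t}"
    and "prob {\<omega>\<in>space M. gain j \<omega> \<le> t} \<le> 2 * t"
proof -
  note [measurable] = asr_measurable[OF assms(1)] adr_measurable[OF assms(1)]
  have asr: "prob {\<omega>\<in>space M. (cmod (asr j \<omega>))\<^sup>2 \<le> t} = measure CN01 {z. (cmod z)\<^sup>2 \<le> t}"
    using prob_link[of "(j, True)" "\<lambda>z. (cmod z)\<^sup>2 \<le> t"] assms(1) by simp
  have adr: "prob {\<omega>\<in>space M. (cmod (adr j \<omega>))\<^sup>2 \<le> t} = measure CN01 {z. (cmod z)\<^sup>2 \<le> t}"
    using prob_link[of "(j, False)" "\<lambda>z. (cmod z)\<^sup>2 \<le> t"] assms(1) by simp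
  have "t * exp (-t) \<le> prob {\<omega>\<in>space M. (cmod (asr j \<omega>))\<^sup>2 \<le> t}"
    using asr measure_CN01_disk_bounds(1)[OF assms(2)] by simp
  also have "\<dots> \<le> prob {\<omega>\<in>space M. gain j \<omega> \<le> t}"
    by (rule finite_measure_mono) auto
  finally show "t * exp (-t) \<le> prob {\<omega>\<in>space M. gain j \<omega> \<le> t}" .
  have "prob {\<omega>\<in>space M. gain j \<omega> \<le> t}
      = prob ({\<omega>\<in>space M. (cmod (asr j \<omega>))\<^sup>2 \<le> t} \<union> {\<omega>\<in>space M. (cmod (adr j \<omega>))\<^sup>2 \<le> t})"
    by (intro arg_cong[where f = prob]) (auto simp: min_le_iff_disj)
  also have "\<dots> \<le> prob {\<omega>\<in>space M. (cmod (asr j \<omega>))\<^sup>2 \<le> t} + prob {\<omega>\<in>space M. (cmod (adr j \<omega>))\<^sup>2 \<le> t}"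
    by (rule measure_Un_le) measurable
  also have "\<dots> \<le> 2 * t"
    using asr adr measure_CN01_disk_bounds(2)[OF assms(2)] by simp
  finally show "prob {\<omega>\<in>space M. gain j \<omega> \<le> t} \<le> 2 * t" .
qed

lemma indep_vars_gain: "indep_vars (\<lambda>_. borel) (\<lambda>j \<omega>. gain j \<omega>) {1..m}"
proof -
  have "indep_vars (\<lambda>j. PiM ({j} \<times> UNIV) (\<lambda>_. borel)) (\<lambda>j \<omega>. \<lambda>i\<in>{j} \<times> UNIV. link i \<omega>) {1..m}"
    by (rule indep_vars_restrict[OF indep_vars_link]) (auto simp: disjoint_family_on_def)
  then have "indep_vars (\<lambda>_. borel)
      (\<lambda>j. (\<lambda>x. min ((cmod (x (j, True)))\<^sup>2) ((cmod (x (j, False)))\<^sup>2)) \<circ> (\<lambda>\<omega>. \<lambda>i\<in>{j} \<times> UNIV. link i \<omega>))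
      {1..m}"
    by (rule indep_vars_compose) measurable
  then show ?thesis by (simp add: o_def)
qed

lemma prob_best_gain_le:
  "prob {\<omega>\<in>space M. gain (b \<omega>) \<omega> \<le> t} = (\<Prod>j\<in>{1..m}. prob {\<omega>\<in>space M. gain j \<omega> \<le> t})"
proof -
  have "{\<omega>\<in>space M. gain (b \<omega>) \<omega> \<le> t} = (\<Inter>j\<in>{1..m}. (\<lambda>\<omega>. gain j \<omega>) -` {..t} \<inter> space M)"
    using best_gain_le_iff m_ge_1 by auto
  moreover have "(\<lambda>\<omega>. gain j \<omega>) -` {..t} \<inter> space M = {\<omega>\<in>space M. gain j \<omega> \<le> t}" for j
    by auto
  ultimately show ?thesis
    using indep_varsD_finite[OF indep_vars_gain, of "\<lambda>_. {..t}"] m_ge_1 by simp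
qed

lemma prob_best_gain_le_bounds:
  assumes "0 < t" "t \<le> 1"
  shows "(exp (-1) * t) ^ m \<le> prob {\<omega>\<in>space M. gain (b \<omega>) \<omega> \<le> t}"
    and "prob {\<omega>\<in>space M. gain (b \<omega>) \<omega> \<le> t} \<le> (2 * t) ^ m"
proof -
  have "exp (-1) * t \<le> t * exp (-t)"
    using assms by (subst mult.commute) (intro mult_left_mono; simp)
  then have "exp (-1) * t \<le> prob {\<omega>\<in>space M. gain j \<omega> \<le> t}" if "j \<in> {1..m}" for j
    using prob_gain_le_bounds(1)[OF that, of t] assms by linarith
  then have "(\<Prod>j\<in>{1..m}. exp (-1) * t) \<le> (\<Prod>j\<in>{1..m}. prob {\<omega>\<in>space M. gain j \<omega> \<le> t})"
    using assms by (intro prod_mono) auto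
  then show "(exp (-1) * t) ^ m \<le> prob {\<omega>\<in>space M. gain (b \<omega>) \<omega> \<le> t}"
    by (simp add: prob_best_gain_le)
  have "(\<Prod>j\<in>{1..m}. prob {\<omega>\<in>space M. gain j \<omega> \<le> t}) \<le> (\<Prod>j\<in>{1..m}. 2 * t)"
    using prob_gain_le_bounds(2) assms by (intro prod_mono) auto
  then show "prob {\<omega>\<in>space M. gain (b \<omega>) \<omega> \<le> t} \<le> (2 * t) ^ m"
    by (simp add: prob_best_gain_le)
qed

lemma prob_best_gain_ge_bounds:
  shows "0 < prob {\<omega>\<in>space M. T \<le> gain (b \<omega>) \<omega>}"
    and "prob {\<omega>\<in>space M. T \<le> gain (b \<omega>) \<omega>} \<le> 2 * real m * exp (-T/2)"
proof -
  have relay_1: "(1, True) \<in> links" "(1, False) \<in> links" using m_ge_1 by auto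
  have "0 < measure CN01 {z. T \<le> (cmod z)\<^sup>2} ^ card {(1::nat, True), (1, False)}"
    using measure_CN01_tail_bounds(1) by simp
  also have "\<dots> = prob {\<omega>\<in>space M. \<forall>i\<in>{(1, True), (1, False)}. link i \<omega> \<in> {z. T \<le> (cmod z)\<^sup>2}}"
    using relay_1 by (intro prob_all_links[symmetric]) auto
  also have "\<dots> \<le> prob {\<omega>\<in>space M. T \<le> gain (b \<omega>) \<omega>}"
    using gain_le_best_gain[of _ 1] m_ge_1 by (intro finite_measure_mono) force+
  finally show "0 < prob {\<omega>\<in>space M. T \<le> gain (b \<omega>) \<omega>}" .
  have tail_asr: "{\<omega>\<in>space M. T \<le> (cmod (asr j \<omega>))\<^sup>2} \<in> sets M" if "j \<in> {1..m}" for j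
    using asr_measurable[OF that] by measurable
  have "prob {\<omega>\<in>space M. T \<le> gain (b \<omega>) \<omega>}
      \<le> prob (\<Union>j\<in>{1..m}. {\<omega>\<in>space M. T \<le> (cmod (asr j \<omega>))\<^sup>2})"
    using best_relay_range tail_asr by (intro finite_measure_mono) force+
  also have "\<dots> \<le> (\<Sum>j\<in>{1..m}. prob {\<omega>\<in>space M. T \<le> (cmod (asr j \<omega>))\<^sup>2})"
    using tail_asr by (intro finite_measure_subadditive_finite) auto
  also have "\<dots> = (\<Sum>j\<in>{1..m}. measure CN01 {z. T \<le> (cmod z)\<^sup>2})"
    using prob_link[of "(_, True)" "\<lambda>z. T \<le> (cmod z)\<^sup>2"] by (intro sum.cong) auto
  also have "\<dots> \<le> 2 * real m * exp (-T/2)"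
    using mult_left_mono[OF measure_CN01_tail_bounds(2)[of T], of "real m"] by simp
  finally show "prob {\<omega>\<in>space M. T \<le> gain (b \<omega>) \<omega>} \<le> 2 * real m * exp (-T/2)" .
qed

lemma prob_asr_best_le_bounds:
  assumes "0 < t" "t \<le> 1"
  shows "0 < prob {\<omega>\<in>space M. (cmod (asr (b \<omega>) \<omega>))\<^sup>2 \<le> t}"
    and "prob {\<omega>\<in>space M. (cmod (asr (b \<omega>) \<omega>))\<^sup>2 \<le> t} \<le> (2 * t) ^ m"
proof -
  have "0 < measure CN01 {z. (cmod z)\<^sup>2 \<le> t} ^ card ({1..m} \<times> {True})"
    using measure_CN01_disk_bounds(1)[of t] assms by (smt (verit) exp_gt_zero mult_pos_pos zero_less_power)
  also have "\<dots> = prob {\<omega>\<in>space M. \<forall>i\<in>{1..m} \<times> {True}. link i \<omega> \<in> {z. (cmod z)\<^sup>2 \<le> t}}"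
    using m_ge_1 by (intro prob_all_links[symmetric]) auto
  also have "\<dots> \<le> prob {\<omega>\<in>space M. (cmod (asr (b \<omega>) \<omega>))\<^sup>2 \<le> t}"
    using best_relay_range by (intro finite_measure_mono) force+
  finally show "0 < prob {\<omega>\<in>space M. (cmod (asr (b \<omega>) \<omega>))\<^sup>2 \<le> t}" .
  have "prob {\<omega>\<in>space M. (cmod (asr (b \<omega>) \<omega>))\<^sup>2 \<le> t} \<le> prob {\<omega>\<in>space M. gain (b \<omega>) \<omega> \<le> t}"
    by (intro finite_measure_mono) auto
  also have "\<dots> \<le> (2 * t) ^ m"
    using prob_best_gain_le_bounds(2)[OF assms] .
  finally show "prob {\<omega>\<in>space M. (cmod (asr (b \<omega>) \<omega>))\<^sup>2 \<le> t} \<le> (2 * t) ^ m" .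
qed

theorem best_gain_exponential_order:
  assumes "0 \<le> v"
  shows "((\<lambda>\<rho>. ln (prob {\<omega>\<in>space M. gain (b \<omega>) \<omega> \<le> \<rho> powr -v}) / ln \<rho>)
           \<longlongrightarrow> - (real m * v)) at_top"
proof (rule tendsto_ln_div_ln_of_power_bounds[of "exp (-1)" 2])
  show "\<forall>\<^sub>F \<rho> in at_top. (exp (-1) * \<rho> powr -v) ^ m \<le> prob {\<omega>\<in>space M. gain (b \<omega>) \<omega> \<le> \<rho> powr -v}
      \<and> prob {\<omega>\<in>space M. gain (b \<omega>) \<omega> \<le> \<rho> powr -v} \<le> (2 * \<rho> powr -v) ^ m"
    using eventually_gt_at_top[of 1]
    by eventually_elim (use prob_best_gain_le_bounds powr_minus_bounds assms in blast)
qed simp_all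

theorem best_gain_tail_exponential_order:
  assumes "v < 0"
  shows "filterlim (\<lambda>\<rho>. ln (prob {\<omega>\<in>space M. \<rho> powr -v \<le> gain (b \<omega>) \<omega>}) / ln \<rho>) at_bot at_top"
  using prob_best_gain_ge_bounds m_ge_1
  by (intro filterlim_ln_div_ln_at_bot_of_exp_bound[OF assms, of "2 * real m"]) auto

theorem asr_best_exponential_order_le:
  assumes "0 \<le> v"
  shows "Limsup at_top (\<lambda>\<rho>. ereal (ln (prob {\<omega>\<in>space M. (cmod (asr (b \<omega>) \<omega>))\<^sup>2 \<le> \<rho> powr -v}) / ln \<rho>))
           \<le> ereal (- (real m * v))"
proof (rule Limsup_ln_div_ln_le_of_power_bound[of 2])
  show "\<forall>\<^sub>F \<rho> in at_top. 0 < prob {\<omega>\<in>space M. (cmod (asr (b \<omega>) \<omega>))\<^sup>2 \<le> \<rho> powr -v}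
      \<and> prob {\<omega>\<in>space M. (cmod (asr (b \<omega>) \<omega>))\<^sup>2 \<le> \<rho> powr -v} \<le> (2 * \<rho> powr -v) ^ m"
    using eventually_gt_at_top[of 1]
    by eventually_elim (use prob_asr_best_le_bounds powr_minus_bounds assms in blast)
qed simp

end

theorem lemma3:
  fixes M :: "'a measure" and m :: nat
    and asr adr :: "nat \<Rightarrow> 'a \<Rightarrow> complex" and b :: "'a \<Rightarrow> nat"
  assumes "prob_space M"
    and "m \<ge> 1"
    and "\<forall>j\<in>{1..m}. distributed M lborel (asr j) CN01_density"
    and "\<forall>j\<in>{1..m}. distributed M lborel (adr j) CN01_density"
    and "prob_space.indep_vars M (\<lambda>_. borel)
           (\<lambda>(j, k). if k then asr j else adr j) ({1..m} \<times> (UNIV :: bool set))"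
    and "b \<in> M \<rightarrow>\<^sub>M count_space UNIV"
    and "\<forall>\<omega>\<in>space M. b \<omega> \<in> {1..m} \<and>
           min ((cmod (asr (b \<omega>) \<omega>))\<^sup>2) ((cmod (adr (b \<omega>) \<omega>))\<^sup>2) =
           Max ((\<lambda>j. min ((cmod (asr j \<omega>))\<^sup>2) ((cmod (adr j \<omega>))\<^sup>2)) ` {1..m})"
  shows
    "(\<forall>v::real. v \<ge> 0 \<longrightarrow>
        ((\<lambda>\<rho>::real. ln (measure M {\<omega>\<in>space M.
            min ((cmod (asr (b \<omega>) \<omega>))\<^sup>2) ((cmod (adr (b \<omega>) \<omega>))\<^sup>2) \<le> \<rho> powr (-v)})
          / ln \<rho>) \<longlongrightarrow> - (real m * v)) at_top)
   \<and> (\<forall>v::real. v < 0 \<longrightarrow>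
        filterlim (\<lambda>\<rho>::real. ln (measure M {\<omega>\<in>space M.
            min ((cmod (asr (b \<omega>) \<omega>))\<^sup>2) ((cmod (adr (b \<omega>) \<omega>))\<^sup>2) \<ge> \<rho> powr (-v)})
          / ln \<rho>) at_bot at_top)
   \<and> (\<forall>v::real. \<forall>\<rho>::real. \<rho> > 0 \<longrightarrow>
        measure M {\<omega>\<in>space M. (cmod (asr (b \<omega>) \<omega>))\<^sup>2 \<le> \<rho> powr (-v)}
        = measure M {\<omega>\<in>space M. (cmod (adr (b \<omega>) \<omega>))\<^sup>2 \<le> \<rho> powr (-v)})
   \<and> (\<forall>v::real. v \<ge> 0 \<longrightarrow>
        Limsup at_top (\<lambda>\<rho>::real. ereal (ln (measure M {\<omega>\<in>space M.
            (cmod (asr (b \<omega>) \<omega>))\<^sup>2 \<le> \<rho> powr (-v)}) / ln \<rho>))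
        \<le> ereal (- (real m * v)))
   \<and> (\<forall>v::real. \<forall>\<rho>::real. v < 0 \<longrightarrow>
        measure M {\<omega>\<in>space M. (cmod (asr (b \<omega>) \<omega>))\<^sup>2 \<le> \<rho> powr (-v)} \<le> 1)"
proof -
  interpret best_relay_selection M m asr adr b
    using assms unfolding best_relay_selection_def best_relay_selection_axioms_def by blast
  show ?thesis
    using best_gain_exponential_order best_gain_tail_exponential_order
      prob_asr_best_eq_prob_adr_best asr_best_exponential_order_le
    by simp
qed

end
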